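(* Let $c_{gap}(\ell)$ denote the spectral gap of the heat-bath Glauber dynamics for proper $k$-colorings of the complete tree of height $\ell$ with branching factor $b$, whose root is additionally adjacent to an external vertex with a fixed color. Then for every $\ell>0$ and $k\le b+2$, $c_{gap}(\ell)\le c_{gap}(\ell-1)$.
   Context: Spectral gap $c_{gap}=\inf_f\mathcal D(f)/\mathrm{Var}(f)$ over non-constant $f$, with Dirichlet form $\mathcal D(f)=\frac12\sum_{\sigma,\sigma'}(f(\sigma)-f(\sigma'))^2\pi(\sigma)P(\sigma,\sigma')$ and $\mathrm{Var}$ the variance under the stationary distribution $\pi$ (uniform on proper colorings consistent with the fixed external color). The heat-bath Glauber dynamics chooses a uniformly random (non-external) vertex and recolors it uniformly among colors not used by its neighbors. The tree of height $0$ is a single vertex adjacent to the external vertex. *)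

theory Defs
  imports "HOL-Library.FuncSet" Complex_Main
begin

text \<open>Complete tree of height l with branching factor b: vertices are words over
  {0..<b} of length at most l; the root is the empty word, and the children of v
  are v @ [i] for i < b.\<close>
definition tree_verts :: "nat \<Rightarrow> nat \<Rightarrow> nat list set" where
  "tree_verts b l = {v. length v \<le> l \<and> (\<forall>i\<in>set v. i < b)}"

definition tree_adj :: "nat list \<Rightarrow> nat list \<Rightarrow> bool" where
  "tree_adj u v \<longleftrightarrow> (\<exists>i. v = u @ [i]) \<or> (\<exists>i. u = v @ [i])"

text \<open>Proper k-colorings of the tree, where the root is additionally adjacent to an
  external vertex of fixed color c (the external vertex is not part of the state).\<close>
definition colorings :: "nat \<Rightarrow> nat \<Rightarrow> nat \<Rightarrow> nat \<Rightarrow> (nat list \<Rightarrow> nat) set" where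
  "colorings b l k c = {\<sigma> \<in> tree_verts b l \<rightarrow>\<^sub>E {..<k}.
     (\<forall>u\<in>tree_verts b l. \<forall>v\<in>tree_verts b l. tree_adj u v \<longrightarrow> \<sigma> u \<noteq> \<sigma> v) \<and> \<sigma> [] \<noteq> c}"

definition avail :: "nat \<Rightarrow> nat \<Rightarrow> nat \<Rightarrow> nat \<Rightarrow> (nat list \<Rightarrow> nat) \<Rightarrow> nat list \<Rightarrow> nat set" where
  "avail b l k c \<sigma> v = {a \<in> {..<k}. (\<forall>u\<in>tree_verts b l. tree_adj u v \<longrightarrow> \<sigma> u \<noteq> a)
                                    \<and> (v = [] \<longrightarrow> a \<noteq> c)}"

definition glauber :: "nat \<Rightarrow> nat \<Rightarrow> nat \<Rightarrow> nat \<Rightarrow> (nat list \<Rightarrow> nat) \<Rightarrow> (nat list \<Rightarrow> nat) \<Rightarrow> real" where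
  "glauber b l k c \<sigma> \<tau> =
     (1 / real (card (tree_verts b l))) *
     (\<Sum>v\<in>tree_verts b l.
        if (\<forall>u\<in>tree_verts b l. u \<noteq> v \<longrightarrow> \<tau> u = \<sigma> u) \<and> \<tau> v \<in> avail b l k c \<sigma> v
        then 1 / real (card (avail b l k c \<sigma> v)) else 0)"

definition stat_pi :: "nat \<Rightarrow> nat \<Rightarrow> nat \<Rightarrow> nat \<Rightarrow> (nat list \<Rightarrow> nat) \<Rightarrow> real" where
  "stat_pi b l k c \<sigma> = (if \<sigma> \<in> colorings b l k c then 1 / real (card (colorings b l k c)) else 0)"

definition dirichlet :: "nat \<Rightarrow> nat \<Rightarrow> nat \<Rightarrow> nat \<Rightarrow> ((nat list \<Rightarrow> nat) \<Rightarrow> real) \<Rightarrow> real" where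
  "dirichlet b l k c f = (1/2) * (\<Sum>\<sigma>\<in>colorings b l k c. \<Sum>\<tau>\<in>colorings b l k c.
      (f \<sigma> - f \<tau>)^2 * stat_pi b l k c \<sigma> * glauber b l k c \<sigma> \<tau>)"

definition variance_pi :: "nat \<Rightarrow> nat \<Rightarrow> nat \<Rightarrow> nat \<Rightarrow> ((nat list \<Rightarrow> nat) \<Rightarrow> real) \<Rightarrow> real" where
  "variance_pi b l k c f =
     (let m = (\<Sum>\<sigma>\<in>colorings b l k c. stat_pi b l k c \<sigma> * f \<sigma>)
      in (\<Sum>\<sigma>\<in>colorings b l k c. stat_pi b l k c \<sigma> * (f \<sigma> - m)^2))"

definition spectral_gap :: "nat \<Rightarrow> nat \<Rightarrow> nat \<Rightarrow> nat \<Rightarrow> real" where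
  "spectral_gap b l k c = Inf {dirichlet b l k c f / variance_pi b l k c f | f.
      \<exists>\<sigma>\<in>colorings b l k c. \<exists>\<tau>\<in>colorings b l k c. f \<sigma> \<noteq> f \<tau>}"

end

theory Submission
  imports Defs
begin

text \<open>Extend a test function f on colorings of the tree of height m to height m + 1 by
  ignoring the leaves, g = f \<circ> restrict. Every coloring of the smaller tree has exactly
  (k - 1)^(number of new leaves) extensions, so g has the same mean and variance as f.
  The Dirichlet form splits into local energies, one per vertex v. For a leaf, that of g
  vanishes. For an old vertex it is at most twice the mean square distance of g to any
  function invariant under recoloring v; choosing the lifted local mean of f at v makes this
  exactly (k - 1)^(number of new leaves) times the local energy of f. Dividing by the larger
  number of vertices only helps, so every Rayleigh quotient at height m dominates one at
  height m + 1. If there is at most one coloring at height m, the same holds at height m + 1,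
  and both gaps are the junk value Inf {}.\<close>

lemma finite_tree_verts: "finite (tree_verts b l)"
proof -
  have "tree_verts b l \<subseteq> {xs. set xs \<subseteq> {..<b} \<and> length xs \<le> l}"
    unfolding tree_verts_def by auto
  moreover have "finite {xs. set xs \<subseteq> {..<b} \<and> length xs \<le> l}"
    by (rule finite_lists_length_le) simp
  ultimately show ?thesis by (rule finite_subset)
qed

lemma Nil_in_tree_verts: "[] \<in> tree_verts b l"
  by (simp add: tree_verts_def)

lemma tree_verts_mono: "m \<le> l \<Longrightarrow> tree_verts b m \<subseteq> tree_verts b l"
  by (auto simp: tree_verts_def)

lemma tree_verts_Suc_diff:
  "tree_verts b (Suc m) - tree_verts b m = {w. length w = Suc m \<and> (\<forall>i\<in>set w. i < b)}"
  by (auto simp: tree_verts_def)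

lemma tree_adj_sym: "tree_adj u v = tree_adj v u"
  by (auto simp: tree_adj_def)

lemma tree_adj_irrefl: "\<not> tree_adj u u"
  by (auto simp: tree_adj_def)

lemma tree_adj_length: "tree_adj u v \<Longrightarrow> length v = Suc (length u) \<or> length u = Suc (length v)"
  by (auto simp: tree_adj_def)

lemma finite_colorings: "finite (colorings b l k c)"
proof -
  have "colorings b l k c \<subseteq> tree_verts b l \<rightarrow>\<^sub>E {..<k}" by (auto simp: colorings_def)
  moreover have "finite (tree_verts b l \<rightarrow>\<^sub>E {..<k})" by (intro finite_PiE finite_tree_verts) auto
  ultimately show ?thesis by (rule finite_subset)
qed

lemma two_le_colors:
  assumes "\<sigma> \<in> colorings b l k c" and "c < k"
  shows "2 \<le> k"
proof -
  have "\<sigma> [] < k" "\<sigma> [] \<noteq> c" using assms(1) Nil_in_tree_verts[of b l] by (auto simp: colorings_def)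
  then show ?thesis using assms(2) by linarith
qed

subsection \<open>Heat-bath update at a single site\<close>

locale heat_bath =
  fixes C :: "('v \<Rightarrow> 'c) set" and A :: "('v \<Rightarrow> 'c) \<Rightarrow> 'c set" and v :: 'v
  assumes finite_states: "finite C"
    and finite_allowed: "\<And>\<sigma>. \<sigma> \<in> C \<Longrightarrow> finite (A \<sigma>)"
    and current_allowed: "\<And>\<sigma>. \<sigma> \<in> C \<Longrightarrow> \<sigma> v \<in> A \<sigma>"
    and recolor_in_states: "\<And>\<sigma> a. \<sigma> \<in> C \<Longrightarrow> a \<in> A \<sigma> \<Longrightarrow> \<sigma>(v:=a) \<in> C"
    and allowed_recolor: "\<And>\<sigma> a. \<sigma> \<in> C \<Longrightarrow> a \<in> A \<sigma> \<Longrightarrow> A (\<sigma>(v:=a)) = A \<sigma>"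
begin

lemma card_allowed_pos: "\<sigma> \<in> C \<Longrightarrow> card (A \<sigma>) > 0"
  using finite_allowed current_allowed card_gt_0_iff by blast

text \<open>The uniform distribution on C is invariant under the update: (\<sigma>, a) \<mapsto> (\<sigma>(v:=a), \<sigma> v)
  is an involution of the pairs (\<sigma>, a) with a \<in> A \<sigma>.\<close>
lemma sum_average_recolor:
  "(\<Sum>\<sigma>\<in>C. (\<Sum>a\<in>A \<sigma>. F (\<sigma>(v:=a))) / card (A \<sigma>)) = (\<Sum>\<sigma>\<in>C. (F \<sigma> :: real))"
proof -
  let ?P = "Sigma C A"
  let ?i = "\<lambda>(\<sigma>,a). (\<sigma>(v:=a), \<sigma> v)"
  have bij: "bij_betw ?i ?P ?P"
    by (rule bij_betw_byWitness[where f'="?i"])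
      (use recolor_in_states allowed_recolor current_allowed in auto)
  have "(\<Sum>\<sigma>\<in>C. (\<Sum>a\<in>A \<sigma>. F (\<sigma>(v:=a))) / card (A \<sigma>))
       = (\<Sum>(\<sigma>,a)\<in>?P. F (\<sigma>(v:=a)) / card (A \<sigma>))"
    unfolding sum_divide_distrib by (rule sum.Sigma) (use finite_states finite_allowed in auto)
  also have "\<dots> = (\<Sum>p\<in>?P. (\<lambda>(\<sigma>,a). F \<sigma> / card (A \<sigma>)) (?i p))"
    by (rule sum.cong) (auto simp: allowed_recolor)
  also have "\<dots> = (\<Sum>(\<sigma>,a)\<in>?P. F \<sigma> / card (A \<sigma>))"
    by (rule sum.reindex_bij_betw[OF bij])
  also have "\<dots> = (\<Sum>\<sigma>\<in>C. (\<Sum>a\<in>A \<sigma>. F \<sigma> / card (A \<sigma>)))"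
    by (rule sum.Sigma[symmetric]) (use finite_states finite_allowed in auto)
  also have "\<dots> = (\<Sum>\<sigma>\<in>C. F \<sigma>)"
    by (rule sum.cong) (use card_allowed_pos in auto)
  finally show ?thesis .
qed

definition local_mean :: "(('v \<Rightarrow> 'c) \<Rightarrow> real) \<Rightarrow> ('v \<Rightarrow> 'c) \<Rightarrow> real" where
  "local_mean g \<sigma> = (\<Sum>a\<in>A \<sigma>. g (\<sigma>(v:=a))) / card (A \<sigma>)"

definition local_energy :: "(('v \<Rightarrow> 'c) \<Rightarrow> real) \<Rightarrow> real" where
  "local_energy g = (\<Sum>\<sigma>\<in>C. (\<Sum>a\<in>A \<sigma>. (g \<sigma> - g (\<sigma>(v:=a)))^2) / card (A \<sigma>))"

lemma local_energy_nonneg: "0 \<le> local_energy g"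
  unfolding local_energy_def by (intro sum_nonneg divide_nonneg_nonneg) auto

lemma local_mean_recolor: "\<sigma> \<in> C \<Longrightarrow> a \<in> A \<sigma> \<Longrightarrow> local_mean g (\<sigma>(v:=a)) = local_mean g \<sigma>"
  by (simp add: local_mean_def allowed_recolor)

lemma sum_diff_mult_local_mean:
  assumes \<phi>: "\<And>\<sigma> a. \<sigma> \<in> C \<Longrightarrow> a \<in> A \<sigma> \<Longrightarrow> \<phi> (\<sigma>(v:=a)) = \<phi> \<sigma>"
  shows "(\<Sum>\<sigma>\<in>C. (g \<sigma> - \<phi> \<sigma>) * (local_mean g \<sigma> - \<phi> \<sigma>)) = (\<Sum>\<sigma>\<in>C. (local_mean g \<sigma> - \<phi> \<sigma>)^2)"
proof -
  define \<psi> where "\<psi> \<sigma> = local_mean g \<sigma> - \<phi> \<sigma>" for \<sigma>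
  have \<psi>: "\<psi> (\<sigma>(v:=a)) = \<psi> \<sigma>" if "\<sigma> \<in> C" "a \<in> A \<sigma>" for \<sigma> a
    using that \<phi> local_mean_recolor by (simp add: \<psi>_def)
  have "(\<Sum>\<sigma>\<in>C. local_mean g \<sigma> * \<psi> \<sigma>)
      = (\<Sum>\<sigma>\<in>C. (\<Sum>a\<in>A \<sigma>. g (\<sigma>(v:=a)) * \<psi> (\<sigma>(v:=a))) / card (A \<sigma>))"
    by (rule sum.cong) (auto simp: local_mean_def \<psi> sum_distrib_right)
  also have "\<dots> = (\<Sum>\<sigma>\<in>C. g \<sigma> * \<psi> \<sigma>)" by (rule sum_average_recolor)
  finally have "(\<Sum>\<sigma>\<in>C. local_mean g \<sigma> * \<psi> \<sigma>) = (\<Sum>\<sigma>\<in>C. g \<sigma> * \<psi> \<sigma>)" .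
  then show ?thesis
    by (simp add: \<psi>_def power2_eq_square left_diff_distrib sum_subtractf)
qed

lemma average_square_diff_recolor:
  assumes \<sigma>: "\<sigma> \<in> C" and \<phi>: "\<And>a. a \<in> A \<sigma> \<Longrightarrow> \<phi> (\<sigma>(v:=a)) = \<phi> \<sigma>"
  shows "(\<Sum>a\<in>A \<sigma>. (g \<sigma> - g (\<sigma>(v:=a)))^2) / card (A \<sigma>)
     = (g \<sigma> - \<phi> \<sigma>)^2 + (\<Sum>a\<in>A \<sigma>. (g (\<sigma>(v:=a)) - \<phi> (\<sigma>(v:=a)))^2) / card (A \<sigma>)
       - 2 * ((g \<sigma> - \<phi> \<sigma>) * (local_mean g \<sigma> - \<phi> \<sigma>))"
proof -
  define n where "n = real (card (A \<sigma>))"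
  have n: "n > 0" using card_allowed_pos[OF \<sigma>] by (simp add: n_def)
  define x where "x = g \<sigma> - \<phi> \<sigma>"
  define y where "y a = g (\<sigma>(v:=a)) - \<phi> \<sigma>" for a
  have "(\<Sum>a\<in>A \<sigma>. (g \<sigma> - g (\<sigma>(v:=a)))^2) = (\<Sum>a\<in>A \<sigma>. x^2 - 2 * x * y a + (y a)^2)"
    by (rule sum.cong) (auto simp: x_def y_def power2_eq_square algebra_simps)
  also have "\<dots> = n * x^2 - 2 * x * (\<Sum>a\<in>A \<sigma>. y a) + (\<Sum>a\<in>A \<sigma>. (y a)^2)"
    by (simp add: sum.distrib sum_subtractf sum_distrib_left n_def)
  finally have sq: "(\<Sum>a\<in>A \<sigma>. (g \<sigma> - g (\<sigma>(v:=a)))^2)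
      = n * x^2 - 2 * x * (\<Sum>a\<in>A \<sigma>. y a) + (\<Sum>a\<in>A \<sigma>. (y a)^2)" .
  have \<phi>_sq: "(\<Sum>a\<in>A \<sigma>. (g (\<sigma>(v:=a)) - \<phi> (\<sigma>(v:=a)))^2) = (\<Sum>a\<in>A \<sigma>. (y a)^2)"
    by (rule sum.cong) (auto simp: y_def \<phi>)
  have mean: "local_mean g \<sigma> - \<phi> \<sigma> = (\<Sum>a\<in>A \<sigma>. y a) / n"
    using n by (simp add: local_mean_def y_def sum_subtractf n_def field_simps)
  show ?thesis unfolding sq \<phi>_sq mean n_def[symmetric] x_def[symmetric] using n
    by (simp add: field_simps power2_eq_square)
qed

lemma local_energy_eq:
  assumes \<phi>: "\<And>\<sigma> a. \<sigma> \<in> C \<Longrightarrow> a \<in> A \<sigma> \<Longrightarrow> \<phi> (\<sigma>(v:=a)) = \<phi> \<sigma>"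
  shows "local_energy g
    = 2 * (\<Sum>\<sigma>\<in>C. (g \<sigma> - \<phi> \<sigma>)^2) - 2 * (\<Sum>\<sigma>\<in>C. (local_mean g \<sigma> - \<phi> \<sigma>)^2)"
proof -
  have "local_energy g = (\<Sum>\<sigma>\<in>C. (g \<sigma> - \<phi> \<sigma>)^2
       + (\<Sum>a\<in>A \<sigma>. (g (\<sigma>(v:=a)) - \<phi> (\<sigma>(v:=a)))^2) / card (A \<sigma>)
       - 2 * ((g \<sigma> - \<phi> \<sigma>) * (local_mean g \<sigma> - \<phi> \<sigma>)))"
    unfolding local_energy_def
    by (intro sum.cong refl average_square_diff_recolor \<phi>)
  also have "\<dots> = (\<Sum>\<sigma>\<in>C. (g \<sigma> - \<phi> \<sigma>)^2)
       + (\<Sum>\<sigma>\<in>C. (\<Sum>a\<in>A \<sigma>. (g (\<sigma>(v:=a)) - \<phi> (\<sigma>(v:=a)))^2) / card (A \<sigma>))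
       - 2 * (\<Sum>\<sigma>\<in>C. (g \<sigma> - \<phi> \<sigma>) * (local_mean g \<sigma> - \<phi> \<sigma>))"
    by (simp add: sum.distrib sum_subtractf sum_distrib_left)
  also have "(\<Sum>\<sigma>\<in>C. (\<Sum>a\<in>A \<sigma>. (g (\<sigma>(v:=a)) - \<phi> (\<sigma>(v:=a)))^2) / card (A \<sigma>))
      = (\<Sum>\<sigma>\<in>C. (g \<sigma> - \<phi> \<sigma>)^2)"
    by (rule sum_average_recolor)
  also note sum_diff_mult_local_mean[OF \<phi>]
  finally show ?thesis by simp
qed

lemma local_energy_le:
  assumes "\<And>\<sigma> a. \<sigma> \<in> C \<Longrightarrow> a \<in> A \<sigma> \<Longrightarrow> \<phi> (\<sigma>(v:=a)) = \<phi> \<sigma>"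
  shows "local_energy g \<le> 2 * (\<Sum>\<sigma>\<in>C. (g \<sigma> - \<phi> \<sigma>)^2)"
  using local_energy_eq[OF assms, of g] sum_nonneg[of C "\<lambda>\<sigma>. (local_mean g \<sigma> - \<phi> \<sigma>)^2"]
  by simp

lemma local_energy_eq_local_mean: "local_energy g = 2 * (\<Sum>\<sigma>\<in>C. (g \<sigma> - local_mean g \<sigma>)^2)"
  using local_energy_eq[of "local_mean g" g] local_mean_recolor by simp

end

lemma heat_bath_colorings:
  assumes v: "v \<in> tree_verts b l"
  shows "heat_bath (colorings b l k c) (\<lambda>\<sigma>. avail b l k c \<sigma> v) v"
proof
  show "finite (colorings b l k c)" by (rule finite_colorings)
  fix \<sigma> assume "\<sigma> \<in> colorings b l k c"
  then have \<sigma>: "\<sigma> \<in> tree_verts b l \<rightarrow>\<^sub>E {..<k}"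
    and proper: "\<forall>u\<in>tree_verts b l. \<forall>w\<in>tree_verts b l. tree_adj u w \<longrightarrow> \<sigma> u \<noteq> \<sigma> w"
    and root: "\<sigma> [] \<noteq> c" by (auto simp: colorings_def)
  show "finite (avail b l k c \<sigma> v)" unfolding avail_def by simp
  show "\<sigma> v \<in> avail b l k c \<sigma> v" unfolding avail_def using \<sigma> proper root v by auto
  fix a assume "a \<in> avail b l k c \<sigma> v"
  then have "a < k" and a_nbrs: "\<forall>u\<in>tree_verts b l. tree_adj u v \<longrightarrow> \<sigma> u \<noteq> a"
    and "v = [] \<longrightarrow> a \<noteq> c" by (auto simp: avail_def)
  then have "\<sigma>(v:=a) \<in> tree_verts b l \<rightarrow>\<^sub>E {..<k}" and "(\<sigma>(v:=a)) [] \<noteq> c"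
    using \<sigma> v root by (auto simp: PiE_iff extensional_def)
  moreover have "(\<sigma>(v:=a)) u \<noteq> (\<sigma>(v:=a)) w"
    if "u \<in> tree_verts b l" "w \<in> tree_verts b l" "tree_adj u w" for u w
  proof -
    have "u \<noteq> w" using that tree_adj_irrefl by metis
    then show ?thesis using that proper a_nbrs tree_adj_sym by (cases "u = v"; cases "w = v") auto
  qed
  ultimately show "\<sigma>(v:=a) \<in> colorings b l k c" unfolding colorings_def by blast
  have "\<And>u. tree_adj u v \<Longrightarrow> (\<sigma>(v:=a)) u = \<sigma> u" using tree_adj_irrefl by fastforce
  then show "avail b l k c (\<sigma>(v:=a)) v = avail b l k c \<sigma> v" unfolding avail_def by auto
qed

lemma glauber_moves:
  assumes \<sigma>: "\<sigma> \<in> colorings b l k c" and v: "v \<in> tree_verts b l"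
  shows "{\<tau> \<in> colorings b l k c. (\<forall>u\<in>tree_verts b l. u \<noteq> v \<longrightarrow> \<tau> u = \<sigma> u) \<and> \<tau> v \<in> avail b l k c \<sigma> v}
         = (\<lambda>a. \<sigma>(v:=a)) ` avail b l k c \<sigma> v"
proof (intro equalityI subsetI)
  interpret heat_bath "colorings b l k c" "\<lambda>\<sigma>. avail b l k c \<sigma> v" v
    by (rule heat_bath_colorings[OF v])
  fix \<tau> assume "\<tau> \<in> (\<lambda>a. \<sigma>(v:=a)) ` avail b l k c \<sigma> v"
  then show "\<tau> \<in> {\<tau> \<in> colorings b l k c. (\<forall>u\<in>tree_verts b l. u \<noteq> v \<longrightarrow> \<tau> u = \<sigma> u) \<and> \<tau> v \<in> avail b l k c \<sigma> v}"
    using recolor_in_states[OF \<sigma>] by auto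
next
  fix \<tau> assume "\<tau> \<in> {\<tau> \<in> colorings b l k c. (\<forall>u\<in>tree_verts b l. u \<noteq> v \<longrightarrow> \<tau> u = \<sigma> u) \<and> \<tau> v \<in> avail b l k c \<sigma> v}"
  then have \<tau>: "\<tau> \<in> colorings b l k c" and agree: "\<forall>u\<in>tree_verts b l. u \<noteq> v \<longrightarrow> \<tau> u = \<sigma> u"
    and a: "\<tau> v \<in> avail b l k c \<sigma> v" by auto
  have "\<tau> \<in> tree_verts b l \<rightarrow>\<^sub>E {..<k}" "\<sigma> \<in> tree_verts b l \<rightarrow>\<^sub>E {..<k}"
    using \<tau> \<sigma> by (auto simp: colorings_def)
  then have "\<tau> = \<sigma>(v := \<tau> v)"
    using agree by (intro ext) (auto simp: PiE_iff extensional_def)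
  then show "\<tau> \<in> (\<lambda>a. \<sigma>(v:=a)) ` avail b l k c \<sigma> v" using a by blast
qed

lemma dirichlet_eq_local_energy:
  "dirichlet b l k c g
    = (\<Sum>v\<in>tree_verts b l. heat_bath.local_energy (colorings b l k c) (\<lambda>\<sigma>. avail b l k c \<sigma> v) v g)
      / (2 * real (card (colorings b l k c)) * real (card (tree_verts b l)))"
proof -
  let ?C = "colorings b l k c" and ?T = "tree_verts b l" and ?A = "avail b l k c"
  let ?N = "real (card ?C) * real (card ?T)"
  let ?move = "\<lambda>\<sigma> v \<tau>. (\<forall>u\<in>?T. u \<noteq> v \<longrightarrow> \<tau> u = \<sigma> u) \<and> \<tau> v \<in> ?A \<sigma> v"
  have inner: "(\<Sum>\<tau>\<in>?C. (g \<sigma> - g \<tau>)^2 * (if ?move \<sigma> v \<tau> then 1 / real (card (?A \<sigma> v)) else 0))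
     = (\<Sum>a\<in>?A \<sigma> v. (g \<sigma> - g (\<sigma>(v:=a)))^2) / card (?A \<sigma> v)"
    if \<sigma>: "\<sigma> \<in> ?C" and v: "v \<in> ?T" for \<sigma> v
  proof -
    have "(\<Sum>\<tau>\<in>?C. (g \<sigma> - g \<tau>)^2 * (if ?move \<sigma> v \<tau> then 1 / real (card (?A \<sigma> v)) else 0))
        = (\<Sum>\<tau>\<in>{\<tau>\<in>?C. ?move \<sigma> v \<tau>}. (g \<sigma> - g \<tau>)^2 / real (card (?A \<sigma> v)))"
      by (simp add: sum.inter_filter[OF finite_colorings, symmetric] if_distrib cong: if_cong)
    also have "\<dots> = (\<Sum>a\<in>?A \<sigma> v. (g \<sigma> - g (\<sigma>(v:=a)))^2 / real (card (?A \<sigma> v)))"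
      unfolding glauber_moves[OF \<sigma> v]
      by (rule sum.reindex[unfolded comp_def]) (rule inj_onI, metis fun_upd_same)
    finally show ?thesis by (simp add: sum_divide_distrib)
  qed
  have "dirichlet b l k c g = (1/2) * (\<Sum>\<sigma>\<in>?C. \<Sum>v\<in>?T. \<Sum>\<tau>\<in>?C.
      (g \<sigma> - g \<tau>)^2 * (if ?move \<sigma> v \<tau> then 1 / real (card (?A \<sigma> v)) else 0) / ?N)"
    unfolding dirichlet_def glauber_def stat_pi_def
    by (simp add: sum_distrib_left sum_divide_distrib mult.assoc sum.swap[where A = ?C and B = ?T])
  also have "\<dots> = (1/2) * (\<Sum>v\<in>?T. \<Sum>\<sigma>\<in>?C.
      (\<Sum>a\<in>?A \<sigma> v. (g \<sigma> - g (\<sigma>(v:=a)))^2) / card (?A \<sigma> v) / ?N)"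
    by (simp add: inner sum_divide_distrib[symmetric] sum.swap[where A = ?C and B = ?T])
  also have "\<dots> = (1/2) * (\<Sum>v\<in>?T. heat_bath.local_energy ?C (\<lambda>\<sigma>. ?A \<sigma> v) v g / ?N)"
    by (intro arg_cong[where f="\<lambda>x. 1/2 * x"] sum.cong refl)
      (simp add: heat_bath.local_energy_def[OF heat_bath_colorings] sum_divide_distrib)
  finally show ?thesis by (simp add: sum_divide_distrib[symmetric] mult.assoc)
qed

lemma dirichlet_nonneg: "0 \<le> dirichlet b l k c f"
  unfolding dirichlet_eq_local_energy
  by (intro divide_nonneg_nonneg sum_nonneg heat_bath.local_energy_nonneg heat_bath_colorings) auto

lemma variance_pi_eq:
  "variance_pi b l k c f
    = (\<Sum>\<sigma>\<in>colorings b l k c. (f \<sigma> - (\<Sum>\<sigma>\<in>colorings b l k c. f \<sigma>) / card (colorings b l k c))^2)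
      / card (colorings b l k c)"
  unfolding variance_pi_def Let_def stat_pi_def by (simp add: sum_divide_distrib)

lemma variance_pi_nonneg: "0 \<le> variance_pi b l k c f"
  unfolding variance_pi_eq by (intro divide_nonneg_nonneg sum_nonneg) auto

subsection \<open>Colorings of the tree of height m + 1 over those of height m\<close>

lemma leaf_eq_parent_snoc:
  assumes "w \<in> tree_verts b (Suc m) - tree_verts b m"
  shows "butlast w \<in> tree_verts b m" and "w = butlast w @ [last w]" and "length w = Suc m"
proof -
  have l: "length w = Suc m" and e: "\<forall>i\<in>set w. i < b" using assms by (auto simp: tree_verts_Suc_diff)
  then show "butlast w \<in> tree_verts b m" by (auto simp: tree_verts_def dest: in_set_butlastD)
  show "w = butlast w @ [last w]" using l by (cases w rule: rev_cases) auto
  show "length w = Suc m" by (fact l)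
qed

lemma restrict_colorings_Suc:
  assumes "\<sigma> \<in> colorings b (Suc m) k c"
  shows "restrict \<sigma> (tree_verts b m) \<in> colorings b m k c"
  using assms tree_verts_mono[of m "Suc m" b] Nil_in_tree_verts[of b m]
  by (auto simp: colorings_def PiE_iff subset_iff)

lemma restrict_leaves_colorings_Suc:
  assumes \<sigma>: "\<sigma> \<in> colorings b (Suc m) k c"
  shows "restrict \<sigma> (tree_verts b (Suc m) - tree_verts b m)
    \<in> (\<Pi>\<^sub>E w\<in>tree_verts b (Suc m) - tree_verts b m. {..<k} - {\<sigma> (butlast w)})"
proof -
  have "\<sigma> w \<in> {..<k} - {\<sigma> (butlast w)}" if w: "w \<in> tree_verts b (Suc m) - tree_verts b m" for w
  proof -
    have "tree_adj (butlast w) w" using leaf_eq_parent_snoc[OF w] unfolding tree_adj_def by metis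
    moreover have "butlast w \<in> tree_verts b (Suc m)"
      using leaf_eq_parent_snoc(1)[OF w] tree_verts_mono[of m "Suc m" b] by auto
    ultimately have "\<sigma> (butlast w) \<noteq> \<sigma> w" using \<sigma> w by (auto simp: colorings_def)
    then show ?thesis using \<sigma> w by (auto simp: colorings_def)
  qed
  then show ?thesis by auto
qed

lemma glue_leaves_colorings_Suc:
  assumes \<sigma>': "\<sigma>' \<in> colorings b m k c"
    and e: "e \<in> (\<Pi>\<^sub>E w\<in>tree_verts b (Suc m) - tree_verts b m. {..<k} - {\<sigma>' (butlast w)})"
  shows "(\<lambda>u. if u \<in> tree_verts b m then \<sigma>' u else e u) \<in> colorings b (Suc m) k c"
proof -
  let ?T' = "tree_verts b m" and ?T = "tree_verts b (Suc m)"
  let ?L = "?T - ?T'" and ?x = "\<lambda>u. if u \<in> tree_verts b m then \<sigma>' u else e u"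
  have sub: "?T' \<subseteq> ?T" by (rule tree_verts_mono) simp
  have \<sigma>'_fun: "\<sigma>' \<in> ?T' \<rightarrow>\<^sub>E {..<k}"
    and \<sigma>'_proper: "\<forall>u\<in>?T'. \<forall>v\<in>?T'. tree_adj u v \<longrightarrow> \<sigma>' u \<noteq> \<sigma>' v"
    and \<sigma>'_root: "\<sigma>' [] \<noteq> c" using \<sigma>' by (auto simp: colorings_def)
  have e_leaf: "w \<in> ?L \<Longrightarrow> e w < k \<and> e w \<noteq> \<sigma>' (butlast w)" for w using e by auto
  have parent: "u = butlast w" if "w \<in> ?L" "u \<in> ?T'" "tree_adj u w \<or> tree_adj w u" for u w
    using that leaf_eq_parent_snoc[OF that(1)] unfolding tree_adj_def tree_verts_def by auto
  have "?x \<in> ?T \<rightarrow>\<^sub>E {..<k}"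
    using \<sigma>'_fun e_leaf e sub by (auto simp: PiE_iff extensional_def)
  moreover have "?x u \<noteq> ?x v" if u: "u \<in> ?T" and v: "v \<in> ?T" and uv: "tree_adj u v" for u v
  proof -
    consider "u \<in> ?T'" "v \<in> ?T'" | "u \<in> ?T'" "v \<in> ?L" | "u \<in> ?L" "v \<in> ?T'" | "u \<in> ?L" "v \<in> ?L"
      using u v by blast
    then show ?thesis
    proof cases
      case 1
      then show ?thesis using \<sigma>'_proper uv by auto
    next
      case 2
      then show ?thesis using parent[of v u] uv e_leaf[of v] by auto
    next
      case 3
      then show ?thesis using parent[of u v] uv e_leaf[of u] by auto
    next
      case 4
      then show ?thesis
        using tree_adj_length[OF uv] leaf_eq_parent_snoc(3)[OF 4(1)] leaf_eq_parent_snoc(3)[OF 4(2)] by simp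
    qed
  qed
  moreover have "?x [] \<noteq> c" using \<sigma>'_root Nil_in_tree_verts[of b m] by simp
  ultimately show ?thesis unfolding colorings_def by blast
qed

lemma bij_betw_restrict_leaves:
  assumes \<sigma>': "\<sigma>' \<in> colorings b m k c"
  shows "bij_betw (\<lambda>\<sigma>. restrict \<sigma> (tree_verts b (Suc m) - tree_verts b m))
    {\<sigma> \<in> colorings b (Suc m) k c. restrict \<sigma> (tree_verts b m) = \<sigma>'}
    (\<Pi>\<^sub>E w\<in>tree_verts b (Suc m) - tree_verts b m. {..<k} - {\<sigma>' (butlast w)})"
proof -
  let ?T' = "tree_verts b m" and ?T = "tree_verts b (Suc m)"
  let ?L = "?T - ?T'"
  let ?F = "{\<sigma> \<in> colorings b (Suc m) k c. restrict \<sigma> ?T' = \<sigma>'}"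
  let ?P = "\<Pi>\<^sub>E w\<in>?L. {..<k} - {\<sigma>' (butlast w)}"
  have sub: "?T' \<subseteq> ?T" by (rule tree_verts_mono) simp
  show ?thesis
  proof (rule bij_betw_byWitness[where f'="\<lambda>e u. if u \<in> ?T' then \<sigma>' u else e u"])
    show "\<forall>\<sigma>\<in>?F. (\<lambda>u. if u \<in> ?T' then \<sigma>' u else restrict \<sigma> ?L u) = \<sigma>"
    proof (intro ballI ext)
      fix \<sigma> u assume "\<sigma> \<in> ?F"
      then have "\<sigma> \<in> ?T \<rightarrow>\<^sub>E {..<k}" and "restrict \<sigma> ?T' = \<sigma>'" by (auto simp: colorings_def)
      then show "(if u \<in> ?T' then \<sigma>' u else restrict \<sigma> ?L u) = \<sigma> u"
        using sub by (cases "u \<in> ?T'") (auto simp: PiE_iff extensional_def)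
    qed
    show "\<forall>e\<in>?P. restrict (\<lambda>u. if u \<in> ?T' then \<sigma>' u else e u) ?L = e"
      by (auto simp: PiE_iff extensional_def)
    show "(\<lambda>\<sigma>. restrict \<sigma> ?L) ` ?F \<subseteq> ?P"
    proof (rule image_subsetI)
      fix \<sigma> assume "\<sigma> \<in> ?F"
      then have \<sigma>: "\<sigma> \<in> colorings b (Suc m) k c" and "restrict \<sigma> ?T' = \<sigma>'" by auto
      then have "\<sigma> (butlast w) = \<sigma>' (butlast w)" if "w \<in> ?L" for w
        using leaf_eq_parent_snoc(1)[OF that] by auto
      then have "(\<Pi>\<^sub>E w\<in>?L. {..<k} - {\<sigma> (butlast w)}) = ?P" by (intro PiE_cong) simp
      then show "restrict \<sigma> ?L \<in> ?P" using restrict_leaves_colorings_Suc[OF \<sigma>] by simp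
    qed
    show "(\<lambda>e u. if u \<in> ?T' then \<sigma>' u else e u) ` ?P \<subseteq> ?F"
    proof (rule image_subsetI)
      fix e assume "e \<in> ?P"
      moreover have "\<sigma>' \<in> ?T' \<rightarrow>\<^sub>E {..<k}" using \<sigma>' by (auto simp: colorings_def)
      ultimately show "(\<lambda>u. if u \<in> ?T' then \<sigma>' u else e u) \<in> ?F"
        using glue_leaves_colorings_Suc[OF \<sigma>'] by (auto simp: PiE_iff extensional_def)
    qed
  qed
qed

lemma card_restrict_fibre:
  assumes \<sigma>': "\<sigma>' \<in> colorings b m k c"
  shows "card {\<sigma> \<in> colorings b (Suc m) k c. restrict \<sigma> (tree_verts b m) = \<sigma>'}
           = (k - 1) ^ card (tree_verts b (Suc m) - tree_verts b m)"
proof -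
  let ?L = "tree_verts b (Suc m) - tree_verts b m"
  have \<sigma>'_fun: "\<sigma>' \<in> tree_verts b m \<rightarrow>\<^sub>E {..<k}" using \<sigma>' by (auto simp: colorings_def)
  have "card {\<sigma> \<in> colorings b (Suc m) k c. restrict \<sigma> (tree_verts b m) = \<sigma>'}
      = card (\<Pi>\<^sub>E w\<in>?L. {..<k} - {\<sigma>' (butlast w)})"
    by (rule bij_betw_same_card[OF bij_betw_restrict_leaves[OF \<sigma>']])
  also have "\<dots> = (\<Prod>w\<in>?L. card ({..<k} - {\<sigma>' (butlast w)}))"
    by (rule card_PiE) (simp add: finite_tree_verts)
  also have "\<dots> = (\<Prod>w\<in>?L. k - 1)"
  proof (rule prod.cong)
    fix w assume "w \<in> ?L"
    then show "card ({..<k} - {\<sigma>' (butlast w)}) = k - 1"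
      using PiE_mem[OF \<sigma>'_fun leaf_eq_parent_snoc(1)] by simp
  qed simp
  finally show ?thesis by simp
qed

lemma sum_colorings_Suc_restrict:
  "(\<Sum>\<sigma>\<in>colorings b (Suc m) k c. h (restrict \<sigma> (tree_verts b m)))
    = real ((k - 1) ^ card (tree_verts b (Suc m) - tree_verts b m)) * (\<Sum>\<sigma>'\<in>colorings b m k c. (h \<sigma>' :: real))"
proof -
  let ?R = "\<lambda>\<sigma>. restrict \<sigma> (tree_verts b m)" and ?C = "colorings b (Suc m) k c"
  have "(\<Sum>\<sigma>\<in>?C. h (?R \<sigma>)) = (\<Sum>\<sigma>'\<in>colorings b m k c. \<Sum>\<sigma>\<in>{\<sigma>\<in>?C. ?R \<sigma> = \<sigma>'}. h (?R \<sigma>))"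
    by (rule sum.group[symmetric]) (auto simp: finite_colorings restrict_colorings_Suc)
  also have "\<dots> = (\<Sum>\<sigma>'\<in>colorings b m k c. real (card {\<sigma>\<in>?C. ?R \<sigma> = \<sigma>'}) * h \<sigma>')"
  proof (rule sum.cong)
    fix \<sigma>' assume "\<sigma>' \<in> colorings b m k c"
    have "(\<Sum>\<sigma>\<in>{\<sigma>\<in>?C. ?R \<sigma> = \<sigma>'}. h (?R \<sigma>)) = (\<Sum>\<sigma>\<in>{\<sigma>\<in>?C. ?R \<sigma> = \<sigma>'}. h \<sigma>')"
      by (rule sum.cong) auto
    then show "(\<Sum>\<sigma>\<in>{\<sigma>\<in>?C. ?R \<sigma> = \<sigma>'}. h (?R \<sigma>)) = real (card {\<sigma>\<in>?C. ?R \<sigma> = \<sigma>'}) * h \<sigma>'"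
      by simp
  qed simp
  also have "\<dots> = (\<Sum>\<sigma>'\<in>colorings b m k c.
      real ((k - 1) ^ card (tree_verts b (Suc m) - tree_verts b m)) * h \<sigma>')"
    by (intro sum.cong refl) (simp add: card_restrict_fibre)
  finally show ?thesis by (simp add: sum_distrib_left)
qed

lemma card_colorings_Suc:
  "card (colorings b (Suc m) k c)
    = (k - 1) ^ card (tree_verts b (Suc m) - tree_verts b m) * card (colorings b m k c)"
proof -
  have "real (card (colorings b (Suc m) k c))
      = real ((k - 1) ^ card (tree_verts b (Suc m) - tree_verts b m) * card (colorings b m k c))"
    using sum_colorings_Suc_restrict[where h = "\<lambda>_. 1" and b = b and m = m and k = k and c = c]
    by simp
  then show ?thesis by (simp only: of_nat_eq_iff)
qed

lemma card_colorings_ge: "c < k \<Longrightarrow> k - 1 \<le> card (colorings b m k c)"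
proof (induction m)
  case 0
  let ?root = "\<lambda>a u. if u = [] then a else undefined"
  have "?root ` ({..<k} - {c}) \<subseteq> colorings b 0 k c"
    by (auto simp: colorings_def tree_verts_def tree_adj_irrefl PiE_iff extensional_def)
  moreover have "inj_on ?root ({..<k} - {c})"
    by (rule inj_onI) (drule fun_cong[of _ _ "[]"], simp)
  ultimately have "card ({..<k} - {c}) \<le> card (colorings b 0 k c)"
    by (intro card_inj_on_le finite_colorings)
  with 0 show ?case by simp
next
  case (Suc m)
  show ?case
  proof (cases "k \<le> 1")
    case False
    then have "1 \<le> (k - 1) ^ card (tree_verts b (Suc m) - tree_verts b m)" by simp
    then have "card (colorings b m k c) \<le> card (colorings b (Suc m) k c)"
      unfolding card_colorings_Suc by (metis mult_1 mult_le_mono1)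
    with Suc show ?thesis by linarith
  qed simp
qed

lemma card_colorings_Suc_le_one:
  assumes "card (colorings b m k c) \<le> 1" and "c < k"
  shows "card (colorings b (Suc m) k c) \<le> 1"
proof -
  have "k - 1 \<le> 1" using card_colorings_ge[OF assms(2), of b m] assms(1) by linarith
  then have "(k - 1) ^ card (tree_verts b (Suc m) - tree_verts b m) \<le> 1"
    by (intro power_le_one) simp_all
  from mult_le_one[OF this _ assms(1)] show ?thesis unfolding card_colorings_Suc by simp
qed

lemma restrict_colorings_Suc_surj:
  assumes "2 \<le> k" and "\<sigma>' \<in> colorings b m k c"
  shows "\<exists>\<sigma>\<in>colorings b (Suc m) k c. restrict \<sigma> (tree_verts b m) = \<sigma>'"
proof -
  have "card {\<sigma> \<in> colorings b (Suc m) k c. restrict \<sigma> (tree_verts b m) = \<sigma>'} \<noteq> 0"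
    unfolding card_restrict_fibre[OF assms(2)] using assms(1) by simp
  then have "{\<sigma> \<in> colorings b (Suc m) k c. restrict \<sigma> (tree_verts b m) = \<sigma>'} \<noteq> {}"
    by (metis card.empty)
  then show ?thesis by blast
qed

subsection \<open>Test functions that ignore the leaves\<close>

definition lift_fun :: "nat \<Rightarrow> nat \<Rightarrow> ((nat list \<Rightarrow> nat) \<Rightarrow> real) \<Rightarrow> (nat list \<Rightarrow> nat) \<Rightarrow> real" where
  "lift_fun b m f \<sigma> = f (restrict \<sigma> (tree_verts b m))"

lemma variance_pi_lift_fun:
  assumes "2 \<le> k"
  shows "variance_pi b (Suc m) k c (lift_fun b m f) = variance_pi b m k c f"
proof -
  let ?C = "colorings b (Suc m) k c" and ?C' = "colorings b m k c"
  define K where "K = real ((k - 1) ^ card (tree_verts b (Suc m) - tree_verts b m))"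
  have K: "K > 0" unfolding K_def using assms by simp
  have sum_lift: "(\<Sum>\<sigma>\<in>?C. h (restrict \<sigma> (tree_verts b m))) = K * (\<Sum>\<sigma>'\<in>?C'. h \<sigma>')"
    for h :: "_ \<Rightarrow> real"
    unfolding K_def by (rule sum_colorings_Suc_restrict)
  have card: "real (card ?C) = K * real (card ?C')" using sum_lift[of "\<lambda>_. 1"] by simp
  define \<mu> where "\<mu> = (\<Sum>\<sigma>\<in>?C'. f \<sigma>) / card ?C'"
  have mean: "(\<Sum>\<sigma>\<in>?C. lift_fun b m f \<sigma>) / card ?C = \<mu>"
    unfolding lift_fun_def sum_lift card \<mu>_def using K by simp
  have "variance_pi b (Suc m) k c (lift_fun b m f)
      = (\<Sum>\<sigma>\<in>?C. (f (restrict \<sigma> (tree_verts b m)) - \<mu>)^2) / card ?C"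
    unfolding variance_pi_eq mean by (simp add: lift_fun_def)
  also have "\<dots> = K * (\<Sum>\<sigma>\<in>?C'. (f \<sigma> - \<mu>)^2) / (K * card ?C')"
    unfolding card sum_lift[of "\<lambda>\<rho>. (f \<rho> - \<mu>)^2"] ..
  also have "\<dots> = variance_pi b m k c f"
    unfolding variance_pi_eq \<mu>_def using K by simp
  finally show ?thesis .
qed

lemma lift_fun_nonconstant:
  assumes "2 \<le> k" and "\<sigma>\<^sub>1 \<in> colorings b m k c" and "\<sigma>\<^sub>2 \<in> colorings b m k c" and "f \<sigma>\<^sub>1 \<noteq> f \<sigma>\<^sub>2"
  shows "\<exists>\<sigma>\<in>colorings b (Suc m) k c. \<exists>\<tau>\<in>colorings b (Suc m) k c. lift_fun b m f \<sigma> \<noteq> lift_fun b m f \<tau>"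
  using restrict_colorings_Suc_surj[OF assms(1,2)] restrict_colorings_Suc_surj[OF assms(1,3)] assms(4)
  unfolding lift_fun_def by metis

lemma local_energy_lift_fun_leaf:
  assumes "v \<in> tree_verts b (Suc m) - tree_verts b m"
  shows "heat_bath.local_energy (colorings b (Suc m) k c) (\<lambda>\<sigma>. avail b (Suc m) k c \<sigma> v) v (lift_fun b m f) = 0"
proof -
  interpret heat_bath "colorings b (Suc m) k c" "\<lambda>\<sigma>. avail b (Suc m) k c \<sigma> v" v
    by (rule heat_bath_colorings) (use assms in auto)
  have "lift_fun b m f (\<sigma>(v:=a)) = lift_fun b m f \<sigma>" for \<sigma> a
    using assms unfolding lift_fun_def by (metis Diff_iff fun_upd_other restrict_ext)
  then show ?thesis unfolding local_energy_def by simp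
qed

lemma avail_restrict_Suc:
  assumes "v \<in> tree_verts b m" and "a \<in> avail b (Suc m) k c \<sigma> v"
  shows "a \<in> avail b m k c (restrict \<sigma> (tree_verts b m)) v"
  using assms tree_verts_mono[of m "Suc m" b] unfolding avail_def by auto

text \<open>The comparison function is the local mean of f at v, which does not change when the
  color of v is resampled in the larger tree, because the available colors there form a
  subset of those in the smaller tree.\<close>
lemma local_energy_lift_fun_le:
  assumes v: "v \<in> tree_verts b m"
  shows "heat_bath.local_energy (colorings b (Suc m) k c) (\<lambda>\<sigma>. avail b (Suc m) k c \<sigma> v) v (lift_fun b m f)
    \<le> real ((k - 1) ^ card (tree_verts b (Suc m) - tree_verts b m))
      * heat_bath.local_energy (colorings b m k c) (\<lambda>\<sigma>. avail b m k c \<sigma> v) v f"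
proof -
  let ?C = "colorings b (Suc m) k c" and ?C' = "colorings b m k c"
  let ?R = "\<lambda>\<sigma>. restrict \<sigma> (tree_verts b m)"
  have "v \<in> tree_verts b (Suc m)" using v tree_verts_mono[of m "Suc m" b] by auto
  then interpret big: heat_bath ?C "\<lambda>\<sigma>. avail b (Suc m) k c \<sigma> v" v by (rule heat_bath_colorings)
  interpret small: heat_bath ?C' "\<lambda>\<sigma>. avail b m k c \<sigma> v" v by (rule heat_bath_colorings[OF v])
  define \<phi> where "\<phi> \<sigma> = small.local_mean f (?R \<sigma>)" for \<sigma>
  have \<phi>: "\<phi> (\<sigma>(v:=a)) = \<phi> \<sigma>" if "\<sigma> \<in> ?C" and "a \<in> avail b (Suc m) k c \<sigma> v" for \<sigma> a
  proof -
    have "?R (\<sigma>(v:=a)) = (?R \<sigma>)(v:=a)" using v by (auto simp: restrict_def)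
    then show ?thesis unfolding \<phi>_def
      using small.local_mean_recolor[OF restrict_colorings_Suc[OF that(1)] avail_restrict_Suc[OF v that(2)]]
      by simp
  qed
  have "big.local_energy (lift_fun b m f) \<le> 2 * (\<Sum>\<sigma>\<in>?C. (lift_fun b m f \<sigma> - \<phi> \<sigma>)^2)"
    by (rule big.local_energy_le[OF \<phi>])
  also have "(\<Sum>\<sigma>\<in>?C. (lift_fun b m f \<sigma> - \<phi> \<sigma>)^2)
      = real ((k - 1) ^ card (tree_verts b (Suc m) - tree_verts b m))
        * (\<Sum>\<sigma>'\<in>?C'. (f \<sigma>' - small.local_mean f \<sigma>')^2)"
    unfolding lift_fun_def \<phi>_def by (rule sum_colorings_Suc_restrict)
  finally show ?thesis by (simp add: small.local_energy_eq_local_mean)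
qed

lemma dirichlet_lift_fun_le:
  assumes "2 \<le> k" and "colorings b m k c \<noteq> {}"
  shows "dirichlet b (Suc m) k c (lift_fun b m f) \<le> dirichlet b m k c f"
proof -
  let ?C = "colorings b (Suc m) k c" and ?C' = "colorings b m k c"
  let ?T = "tree_verts b (Suc m)" and ?T' = "tree_verts b m"
  let ?E = "\<lambda>v. heat_bath.local_energy ?C (\<lambda>\<sigma>. avail b (Suc m) k c \<sigma> v) v (lift_fun b m f)"
  let ?E' = "\<lambda>v. heat_bath.local_energy ?C' (\<lambda>\<sigma>. avail b m k c \<sigma> v) v f"
  define K where "K = real ((k - 1) ^ card (?T - ?T'))"
  have K: "K > 0" unfolding K_def using assms(1) by simp
  have card: "real (card ?C) = K * real (card ?C')"
    unfolding K_def card_colorings_Suc by simp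
  have C': "real (card ?C') > 0" using assms(2) finite_colorings card_gt_0_iff by fastforce
  have sub: "?T' \<subseteq> ?T" by (rule tree_verts_mono) simp
  have T': "real (card ?T') > 0" using Nil_in_tree_verts finite_tree_verts card_gt_0_iff by fastforce
  have T'_le: "real (card ?T') \<le> real (card ?T)" using card_mono[OF finite_tree_verts sub] by simp
  have E'_nonneg: "0 \<le> (\<Sum>v\<in>?T'. ?E' v)"
    by (intro sum_nonneg heat_bath.local_energy_nonneg heat_bath_colorings)
  have "(\<Sum>v\<in>?T. ?E v) = (\<Sum>v\<in>?T'. ?E v)"
    by (rule sum.mono_neutral_right) (use finite_tree_verts sub local_energy_lift_fun_leaf in auto)
  also have "\<dots> \<le> K * (\<Sum>v\<in>?T'. ?E' v)"
    unfolding K_def sum_distrib_left by (intro sum_mono local_energy_lift_fun_le)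
  finally have "dirichlet b (Suc m) k c (lift_fun b m f) \<le> K * (\<Sum>v\<in>?T'. ?E' v) / (2 * (K * real (card ?C')) * real (card ?T))"
    unfolding dirichlet_eq_local_energy card using K C' T' T'_le by (intro divide_right_mono) auto
  also have "\<dots> \<le> (\<Sum>v\<in>?T'. ?E' v) / (2 * real (card ?C') * real (card ?T'))"
    using K C' T' T'_le E'_nonneg by (simp add: frac_le)
  also have "\<dots> = dirichlet b m k c f" unfolding dirichlet_eq_local_energy ..
  finally show ?thesis .
qed

definition rayleigh_quotients :: "nat \<Rightarrow> nat \<Rightarrow> nat \<Rightarrow> nat \<Rightarrow> real set" where
  "rayleigh_quotients b l k c = {dirichlet b l k c f / variance_pi b l k c f | f.
      \<exists>\<sigma>\<in>colorings b l k c. \<exists>\<tau>\<in>colorings b l k c. f \<sigma> \<noteq> f \<tau>}"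

lemma spectral_gap_eq_Inf: "spectral_gap b l k c = Inf (rayleigh_quotients b l k c)"
  unfolding spectral_gap_def rayleigh_quotients_def ..

lemma bdd_below_rayleigh_quotients: "bdd_below (rayleigh_quotients b l k c)"
  unfolding rayleigh_quotients_def
  by (rule bdd_belowI[where m = 0]) (auto intro: divide_nonneg_nonneg dirichlet_nonneg variance_pi_nonneg)

lemma rayleigh_quotients_eq_empty_iff:
  "rayleigh_quotients b l k c = {} \<longleftrightarrow> card (colorings b l k c) \<le> 1"
proof -
  let ?C = "colorings b l k c"
  have "rayleigh_quotients b l k c = {} \<longleftrightarrow> (\<forall>\<sigma>\<in>?C. \<forall>\<tau>\<in>?C. \<sigma> = \<tau>)"
  proof
    assume empty: "rayleigh_quotients b l k c = {}"
    show "\<forall>\<sigma>\<in>?C. \<forall>\<tau>\<in>?C. \<sigma> = \<tau>"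
    proof (intro ballI, rule ccontr)
      fix \<sigma> \<tau> assume \<sigma>: "\<sigma> \<in> ?C" and \<tau>: "\<tau> \<in> ?C" and "\<sigma> \<noteq> \<tau>"
      define h :: "(nat list \<Rightarrow> nat) \<Rightarrow> real" where "h \<rho> = (if \<rho> = \<sigma> then 1 else 0)" for \<rho>
      have "dirichlet b l k c h / variance_pi b l k c h \<in> rayleigh_quotients b l k c"
        unfolding rayleigh_quotients_def mem_Collect_eq
        by (rule exI[of _ h]) (use \<sigma> \<tau> \<open>\<sigma> \<noteq> \<tau>\<close> in \<open>auto simp: h_def\<close>)
      then show False by (simp add: empty)
    qed
  next
    assume "\<forall>\<sigma>\<in>?C. \<forall>\<tau>\<in>?C. \<sigma> = \<tau>"
    then show "rayleigh_quotients b l k c = {}" unfolding rayleigh_quotients_def by force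
  qed
  also have "\<dots> \<longleftrightarrow> card ?C \<le> 1"
    using card_le_Suc0_iff_eq[OF finite_colorings] by simp
  finally show ?thesis .
qed

lemma rayleigh_quotient_lift:
  assumes x: "x \<in> rayleigh_quotients b m k c" and "c < k"
  shows "\<exists>y\<in>rayleigh_quotients b (Suc m) k c. y \<le> x"
proof -
  obtain f \<sigma>\<^sub>1 \<sigma>\<^sub>2 where x_eq: "x = dirichlet b m k c f / variance_pi b m k c f"
    and \<sigma>\<^sub>1: "\<sigma>\<^sub>1 \<in> colorings b m k c" and \<sigma>\<^sub>2: "\<sigma>\<^sub>2 \<in> colorings b m k c" and "f \<sigma>\<^sub>1 \<noteq> f \<sigma>\<^sub>2"
    using x unfolding rayleigh_quotients_def by blast
  have k: "2 \<le> k" using two_le_colors[OF \<sigma>\<^sub>1 assms(2)] .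
  let ?g = "lift_fun b m f"
  have "dirichlet b (Suc m) k c ?g / variance_pi b (Suc m) k c ?g \<in> rayleigh_quotients b (Suc m) k c"
    using lift_fun_nonconstant[OF k \<sigma>\<^sub>1 \<sigma>\<^sub>2 \<open>f \<sigma>\<^sub>1 \<noteq> f \<sigma>\<^sub>2\<close>] unfolding rayleigh_quotients_def by blast
  moreover have "dirichlet b (Suc m) k c ?g / variance_pi b (Suc m) k c ?g \<le> x"
    unfolding x_eq variance_pi_lift_fun[OF k]
    by (intro divide_right_mono dirichlet_lift_fun_le[OF k] variance_pi_nonneg) (use \<sigma>\<^sub>1 in auto)
  ultimately show ?thesis by blast
qed

theorem lemma15:
  fixes b k c l :: nat
  assumes "l > 0" and "k \<le> b + 2" and "c < k"
  shows "spectral_gap b l k c \<le> spectral_gap b (l - 1) k c"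
proof -
  obtain m where l: "l = Suc m" using assms(1) by (cases l) auto
  show ?thesis
  proof (cases "rayleigh_quotients b m k c = {}")
    case True
    then have "card (colorings b m k c) \<le> 1" by (simp only: rayleigh_quotients_eq_empty_iff)
    then have "rayleigh_quotients b (Suc m) k c = {}"
      unfolding rayleigh_quotients_eq_empty_iff by (rule card_colorings_Suc_le_one[OF _ assms(3)])
    with True show ?thesis by (simp add: spectral_gap_eq_Inf l)
  next
    case False
    have "Inf (rayleigh_quotients b (Suc m) k c) \<le> Inf (rayleigh_quotients b m k c)"
      by (rule cInf_mono[OF False bdd_below_rayleigh_quotients rayleigh_quotient_lift[OF _ assms(3)]])
    then show ?thesis by (simp add: spectral_gap_eq_Inf l)
  qed
qed

end
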